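(* Let $a,b\in\mathbb{Z}$ with $\gcd(a,b)=1$ and $a^2+ab-b^2\not\equiv0\pmod5$. Let $m\ge1$ with $5\nmid m$, and suppose $\{G_n(a,b)\}$ is complete mod $m$. Then $\{G_n(a,b)\}$ is complete mod $5m$.
   Context: For integers $a,b$ with $\gcd(a,b)=1$, the Gibonacci sequence $\{G_n(a,b)\}_{n\ge1}$ is defined by $G_1=a$, $G_2=b$, $G_{n+1}=G_{n-1}+G_n$. A sequence is complete mod $m$ if every residue class modulo $m$ contains some term of the sequence. *)

theory Defs
  imports Main "HOL-Number_Theory.Cong"
begin

text \<open>Gibonacci sequence: gib a b 1 = a, gib a b 2 = b, gib a b (n+1) = gib a b (n-1) + gib a b n.
  Indexing starts at 1; the value at 0 is irrelevant (set to b - a for convenience).\<close>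
fun gib :: "int \<Rightarrow> int \<Rightarrow> nat \<Rightarrow> int" where
  "gib a b 0 = b - a"
| "gib a b (Suc 0) = a"
| "gib a b (Suc (Suc 0)) = b"
| "gib a b (Suc (Suc (Suc n))) = gib a b (Suc n) + gib a b (Suc (Suc n))"

definition complete_mod :: "(nat \<Rightarrow> int) \<Rightarrow> int \<Rightarrow> bool" where
  "complete_mod G m \<longleftrightarrow> (\<forall>r::int. \<exists>n\<ge>1. [G n = r] (mod m))"

end

theory Submission
  imports Defs "HOL-Number_Theory.Number_Theory"
begin

text \<open>Let \<open>\<phi>\<^sup>2 = \<phi> + 1\<close>. Then \<open>G\<^sub>n\<^sub>+\<^sub>k = c G\<^sub>n + d G\<^sub>n\<^sub>+\<^sub>1\<close> where \<open>\<phi>\<^sup>k = c + d\<phi>\<close>, so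
  \<open>m | \<phi>\<^sup>T - 1\<close> in \<open>\<int>[\<phi>]\<close> makes \<open>T\<close> a period of \<open>G\<close> mod \<open>m\<close>. For a prime
  \<open>p \<noteq> 2, 5\<close> the Frobenius congruence \<open>(2\<phi>)\<^sup>p = (1 + \<surd>5)\<^sup>p \<equiv> 1 + (5/p) \<surd>5\<close> gives
  \<open>\<phi>\<^sup>p\<^sup>-\<^sup>1 \<equiv> 1\<close> if \<open>(5/p) = 1\<close>, a period shorter than \<open>p\<close>, which rules out completeness
  mod \<open>p\<close>; if \<open>(5/p) = -1\<close> it gives \<open>\<phi>\<^sup>2\<^sup>(\<^sup>p\<^sup>+\<^sup>1\<^sup>) \<equiv> 1\<close>, and reciprocity shows
  \<open>5 \<nmid> p + 1\<close>. Lifting to prime powers and multiplying, completeness mod \<open>m\<close> yields a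
  period \<open>T\<close> mod \<open>m\<close> with \<open>5 \<nmid> T\<close>.

  Modulo 5 we have \<open>G\<^sub>n\<^sub>+\<^sub>4\<^sub>j \<equiv> G\<^sub>n + j (G\<^sub>n + 3 G\<^sub>n\<^sub>+\<^sub>1)\<close>, and the increment is
  prime to 5 because \<open>G\<^sub>n\<^sup>2 + G\<^sub>n G\<^sub>n\<^sub>+\<^sub>1 - G\<^sub>n\<^sub>+\<^sub>1\<^sup>2 = \<plusminus>(a\<^sup>2 + ab - b\<^sup>2)\<close>. Hence
  \<open>G\<^sub>n\<^sub>+\<^sub>4\<^sub>j\<^sub>T\<close> stays fixed mod \<open>m\<close> while running through all residues mod 5.\<close>

section \<open>Congruences in commutative rings\<close>

lemma of_int_dvd_of_int_mult:
  assumes "k dvd l"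
  shows "of_int k dvd (of_int l * x :: 'a::comm_ring_1)"
proof -
  from assms obtain c where "l = k * c" ..
  then have "of_int l * x = of_int k * (of_int c * x)" by (simp add: mult.assoc)
  then show ?thesis ..
qed

lemma prime_dvd_power_add_diff:
  fixes x y :: "'a::comm_ring_1"
  assumes p: "prime p"
  shows "of_nat p dvd (x + y) ^ p - x ^ p - y ^ p"
proof -
  define f where "f k = of_nat (p choose k) * x ^ k * y ^ (p - k)" for k
  have "p > 0" using p prime_gt_0_nat by blast
  then have split: "{..p} = insert 0 (insert p {0<..<p})" by auto
  have "(x + y) ^ p = (\<Sum>k\<le>p. f k)"
    unfolding f_def by (rule binomial_ring)
  also have "\<dots> = y ^ p + x ^ p + (\<Sum>k\<in>{0<..<p}. f k)"
    unfolding split using \<open>p > 0\<close> by (simp add: f_def)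
  finally have eq: "(x + y) ^ p - x ^ p - y ^ p = (\<Sum>k\<in>{0<..<p}. f k)"
    by (simp add: algebra_simps)
  have "of_nat p dvd f k" if "k \<in> {0<..<p}" for k
  proof -
    have "p dvd p choose k" using that p by (intro dvd_choose_prime) auto
    then obtain c where "p choose k = p * c" ..
    then show ?thesis by (simp add: f_def mult.assoc)
  qed
  then show ?thesis unfolding eq by (rule dvd_sum)
qed

lemma power_diff_one_dvd_power_mult_diff_one:
  fixes x :: "'a::comm_ring_1"
  shows "x ^ k - 1 dvd x ^ (k * l) - 1"
  by (simp add: power_mult power_diff_1_eq)

text \<open>If \<open>x \<equiv> 1\<close> mod \<open>d\<close> and \<open>p | d\<close>, then \<open>1 + x + \<dots> + x\<^sup>p\<^sup>-\<^sup>1 \<equiv> p \<equiv> 0\<close> mod \<open>p\<close>.\<close>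

lemma dvd_power_prime_diff_one:
  fixes x :: "'a::comm_ring_1"
  assumes "p dvd d" "of_nat d dvd x - 1"
  shows "of_nat (d * p) dvd x ^ p - 1"
proof -
  have "of_nat p dvd (of_nat d :: 'a)"
    using assms(1) by (auto elim!: dvdE)
  then have "of_nat p dvd x - 1"
    using assms(2) by (rule dvd_trans)
  then have "of_nat p dvd x ^ i - 1" for i
    using power_diff_one_dvd_power_mult_diff_one[of x 1 i] dvd_trans by fastforce
  then have "of_nat p dvd (\<Sum>i<p. x ^ i - 1)"
    by (simp add: dvd_sum)
  moreover have "(\<Sum>i<p. x ^ i - 1) = (\<Sum>i<p. x ^ i) - of_nat p"
    by (simp add: sum_subtractf)
  ultimately have "of_nat p dvd (\<Sum>i<p. x ^ i)"
    by (metis diff_add_cancel dvd_add dvd_refl)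
  then have "of_nat d * of_nat p dvd (x - 1) * (\<Sum>i<p. x ^ i)"
    using assms(2) by (rule mult_dvd_mono[rotated])
  then show ?thesis by (simp add: power_diff_1_eq)
qed

lemma one_add_power_cong_linear:
  fixes e :: "'a::comm_ring_1"
  assumes "d dvd e ^ 2"
  shows "d dvd (1 + e) ^ j - (1 + of_nat j * e)"
proof (induction j)
  case (Suc j)
  have "(1 + e) ^ Suc j - (1 + of_nat (Suc j) * e)
      = ((1 + e) ^ j - (1 + of_nat j * e)) * (1 + e) + of_nat j * e ^ 2"
    by (simp add: power2_eq_square algebra_simps)
  also have "d dvd \<dots>"
    by (rule dvd_add[OF dvd_mult2[OF Suc.IH] dvd_mult[OF assms]])
  finally show ?case .
qed simp

section \<open>The ring \<open>\<int>[\<phi>]\<close>\<close>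

text \<open>\<open>ZPhi x y\<close> represents \<open>x + y\<phi>\<close> in \<open>\<int>[\<phi>]\<close>, where \<open>\<phi>\<^sup>2 = \<phi> + 1\<close>.\<close>

datatype zphi = ZPhi (re: int) (im: int)

lemma zphi_eq_iff: "x = y \<longleftrightarrow> re x = re y \<and> im x = im y"
  by (cases x; cases y) auto

instantiation zphi :: comm_ring_1
begin
definition "0 = ZPhi 0 0"
definition "1 = ZPhi 1 0"
definition "x + y = ZPhi (re x + re y) (im x + im y)"
definition "- x = ZPhi (- re x) (- im x)"
definition "x - y = ZPhi (re x - re y) (im x - im y)"
definition "x * y = ZPhi (re x * re y + im x * im y) (re x * im y + im x * re y + im x * im y)"
instance
  by standard (auto simp: zphi_eq_iff zero_zphi_def one_zphi_def plus_zphi_def uminus_zphi_def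
      minus_zphi_def times_zphi_def algebra_simps)
end

lemma zphi_simps [simp]:
  "re 0 = 0" "im 0 = 0" "re 1 = 1" "im 1 = 0"
  "re (x + y) = re x + re y" "im (x + y) = im x + im y"
  "re (x - y) = re x - re y" "im (x - y) = im x - im y"
  "re (- x) = - re x" "im (- x) = - im x"
  "re (x * y) = re x * re y + im x * im y"
  "im (x * y) = re x * im y + im x * re y + im x * im y"
  by (simp_all add: zero_zphi_def one_zphi_def plus_zphi_def uminus_zphi_def minus_zphi_def
      times_zphi_def)

lemma re_of_nat [simp]: "re (of_nat n) = int n" "im (of_nat n) = 0"
  by (induction n) simp_all

lemma re_of_int [simp]: "re (of_int k) = k" "im (of_int k) = 0"
  by (cases k rule: int_cases; simp)+

lemma re_numeral [simp]: "re (numeral k) = numeral k" "im (numeral k) = 0"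
  using re_of_int[of "numeral k"] by simp_all

lemma of_int_dvd_zphi_iff: "of_int k dvd z \<longleftrightarrow> k dvd re z \<and> k dvd im z"
proof
  assume "of_int k dvd z"
  then obtain w where "z = of_int k * w" ..
  then show "k dvd re z \<and> k dvd im z" by simp
next
  assume "k dvd re z \<and> k dvd im z"
  then obtain u v where "re z = k * u" "im z = k * v" by (auto elim!: dvdE)
  then have "z = of_int k * ZPhi u v" by (simp add: zphi_eq_iff)
  then show "of_int k dvd z" ..
qed

lemma of_nat_dvd_zphi_iff: "of_nat k dvd (z :: zphi) \<longleftrightarrow> int k dvd re z \<and> int k dvd im z"
  using of_int_dvd_zphi_iff[of "int k" z] by simp

lemma of_int_mult_dvd_zphi:
  assumes "coprime k l" "of_int k dvd z" "of_int l dvd (z :: zphi)"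
  shows "of_int (k * l) dvd z"
  using assms unfolding of_int_dvd_zphi_iff by (simp add: divides_mult)

definition phi :: zphi where "phi = ZPhi 0 1"

lemma phi_mult_phi_minus_1: "phi * (phi - 1) = 1"
  by (simp add: phi_def zphi_eq_iff)

lemma re_im_phi [simp]: "re phi = 0" "im phi = 1"
  by (simp_all add: phi_def)

definition sqrt5 :: zphi where "sqrt5 = 2 * phi - 1"

lemma sqrt5_power_odd: "sqrt5 ^ (2 * h + 1) = of_int (5 ^ h) * sqrt5"
proof -
  have "sqrt5 ^ 2 = of_int 5"
    by (simp add: sqrt5_def zphi_eq_iff power2_eq_square)
  then show ?thesis by (simp add: power_mult)
qed

section \<open>Periods of Gibonacci sequences\<close>

lemma gib_add_2: "gib a b (n + 2) = gib a b n + gib a b (n + 1)"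
proof (cases n)
  case (Suc k)
  then show ?thesis by (cases k) simp_all
qed simp

lemma gib_add_phi_power:
  "gib a b (n + k) = re (phi ^ k) * gib a b n + im (phi ^ k) * gib a b (n + 1)"
proof (induction k arbitrary: n)
  case (Suc k)
  have "gib a b (n + Suc k) = re (phi ^ k) * gib a b (n + 1) + im (phi ^ k) * gib a b (n + 2)"
    using Suc[of "n + 1"] by (simp add: add.assoc)
  then show ?case
    using gib_add_2[of a b n] by (simp add: algebra_simps)
qed simp

lemma gib_add_period_cong:
  assumes "of_int m dvd phi ^ T - 1"
  shows "[gib a b (n + T) = gib a b n] (mod m)"
proof -
  from assms have "[re (phi ^ T) = 1] (mod m)" "[im (phi ^ T) = 0] (mod m)"
    by (simp_all add: of_int_dvd_zphi_iff cong_iff_dvd_diff cong_0_iff)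
  then have "[re (phi ^ T) * gib a b n + im (phi ^ T) * gib a b (n + 1)
      = 1 * gib a b n + 0 * gib a b (n + 1)] (mod m)"
    by (intro cong_add cong_mult cong_refl)
  then show ?thesis by (simp add: gib_add_phi_power)
qed

lemma gib_add_mult_period_cong:
  assumes "of_int m dvd phi ^ T - 1"
  shows "[gib a b (n + k * T) = gib a b n] (mod m)"
proof (induction k)
  case (Suc k)
  have "[gib a b ((n + k * T) + T) = gib a b (n + k * T)] (mod m)"
    using assms by (rule gib_add_period_cong)
  with Suc show ?case by (simp add: ac_simps) (metis cong_trans)
qed simp

lemma complete_mod_dvd:
  assumes "complete_mod G m" "d dvd m"
  shows "complete_mod G d"
  using assms unfolding complete_mod_def by (meson cong_dvd_modulus)

text \<open>A sequence with period \<open>T\<close> mod \<open>m\<close> takes at most \<open>T\<close> values mod \<open>m\<close>.\<close>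

lemma complete_mod_le_period:
  assumes complete: "complete_mod (gib a b) m" and "m > 0" "T > 0"
    and period: "of_int m dvd phi ^ T - 1"
  shows "m \<le> int T"
proof -
  have "r \<in> (\<lambda>n. gib a b n mod m) ` {1..T}" if "r \<in> {0..<m}" for r
  proof -
    obtain n where n: "n \<ge> 1" "[gib a b n = r] (mod m)"
      using complete unfolding complete_mod_def by blast
    define n' where "n' = (n - 1) mod T + 1"
    have "n = n' + ((n - 1) div T) * T"
      using n(1) unfolding n'_def by simp
    then have "[gib a b n' = r] (mod m)"
      using gib_add_mult_period_cong[OF period, of a b n' "(n - 1) div T"] n(2)
      by (metis cong_sym cong_trans)
    then have "gib a b n' mod m = r"
      using that by (simp add: cong_def)
    moreover have "n' \<in> {1..T}"
      using \<open>T > 0\<close> unfolding n'_def by (simp add: Suc_le_eq)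
    ultimately show ?thesis by blast
  qed
  then have "card {0..<m} \<le> card ((\<lambda>n. gib a b n mod m) ` {1..T})"
    by (intro card_mono) auto
  also have "\<dots> \<le> T"
    using card_image_le[of "{1..T}"] by simp
  finally show ?thesis using \<open>m > 0\<close> by simp
qed

section \<open>Moduli prime to 5\<close>

lemma double_phi_power_prime_cong:
  assumes p: "prime p" "p > 2"
  shows "of_nat p dvd 2 * phi ^ p - 1 - of_int (Legendre 5 (int p)) * sqrt5"
proof -
  define L where "L = Legendre 5 (int p)"
  obtain h where h: "p = 2 * h + 1"
    using prime_odd_nat[OF p] by (auto elim!: oddE)
  have "[L = 5 ^ ((p - 1) div 2)] (mod int p)"
    unfolding L_def using p by (rule euler_criterion)
  then have "int p dvd 5 ^ h - L"
    by (simp add: h cong_iff_dvd_diff dvd_diff_commute)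
  then have euler: "of_nat p dvd of_int (5 ^ h - L) * sqrt5"
    using of_int_dvd_of_int_mult by (metis of_int_of_nat_eq)
  have "int p dvd (1 + 1) ^ p - 1 ^ p - 1 ^ p"
    using prime_dvd_power_add_diff[OF p(1)] by (metis of_int_of_nat_eq)
  then have "int p dvd 2 ^ p - 2"
    by simp
  then have fermat: "of_nat p dvd of_int (2 ^ p - 2) * phi ^ p"
    using of_int_dvd_of_int_mult by (metis of_int_of_nat_eq)
  have frobenius: "of_nat p dvd (1 + sqrt5) ^ p - 1 ^ p - sqrt5 ^ p"
    using prime_dvd_power_add_diff[OF p(1)] .
  have "(1 + sqrt5) ^ p = of_int (2 ^ p) * phi ^ p"
    by (simp add: sqrt5_def power_mult_distrib)
  moreover have "sqrt5 ^ p = of_int (5 ^ h) * sqrt5"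
    unfolding h by (rule sqrt5_power_odd)
  ultimately have "2 * phi ^ p - 1 - of_int L * sqrt5
      = ((1 + sqrt5) ^ p - 1 ^ p - sqrt5 ^ p) + of_int (5 ^ h - L) * sqrt5
        - of_int (2 ^ p - 2) * phi ^ p"
    by (simp add: algebra_simps)
  also have "of_nat p dvd \<dots>"
    by (rule dvd_diff[OF dvd_add[OF frobenius euler] fermat])
  finally show ?thesis unfolding L_def .
qed

lemma of_nat_dvd_zphi_double_cancel:
  assumes "prime p" "p > 2" "of_nat p dvd 2 * z"
  shows "of_nat p dvd (z :: zphi)"
proof -
  have "\<not> p dvd 2"
    using assms(1,2) by (metis less_irrefl primes_dvd_imp_eq two_is_prime_nat)
  then have "coprime (int p) 2"
    using assms(1) by (metis coprime_int_iff of_nat_numeral prime_imp_coprime)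
  then show ?thesis
    using assms(3) unfolding of_nat_dvd_zphi_iff by (simp add: coprime_dvd_mult_right_iff)
qed

lemma phi_power_pred_prime_cong:
  assumes p: "prime p" "p > 2" and L: "Legendre 5 (int p) = 1"
  shows "of_nat p dvd phi ^ (p - 1) - 1"
proof -
  have "of_nat p dvd 2 * phi ^ p - 1 - of_int (Legendre 5 (int p)) * sqrt5"
    using p by (rule double_phi_power_prime_cong)
  also have "\<dots> = 2 * (phi ^ p - phi)"
    using L by (simp add: sqrt5_def algebra_simps)
  finally have "of_nat p dvd phi ^ p - phi"
    by (rule of_nat_dvd_zphi_double_cancel[OF p])
  then have "of_nat p dvd (phi ^ p - phi) * (phi - 1)"
    by (rule dvd_mult2)
  also have "(phi ^ p - phi) * (phi - 1) = phi ^ (p - 1) * (phi * (phi - 1)) - phi * (phi - 1)"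
    using p by (cases p) (simp_all add: algebra_simps)
  also have "\<dots> = phi ^ (p - 1) - 1"
    by (simp add: phi_mult_phi_minus_1)
  finally show ?thesis .
qed

lemma phi_power_double_succ_prime_cong:
  assumes p: "prime p" "p > 2" and L: "Legendre 5 (int p) = -1"
  shows "of_nat p dvd phi ^ (2 * (p + 1)) - 1"
proof -
  have "of_nat p dvd 2 * phi ^ p - 1 - of_int (Legendre 5 (int p)) * sqrt5"
    using p by (rule double_phi_power_prime_cong)
  also have "\<dots> = 2 * (phi ^ p + phi - 1)"
    using L by (simp add: sqrt5_def algebra_simps)
  finally have "of_nat p dvd phi ^ p + phi - 1"
    by (rule of_nat_dvd_zphi_double_cancel[OF p])
  then have "of_nat p dvd (phi ^ (p + 1) - 1) * (phi * (phi ^ p + phi - 1))"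
    by (rule dvd_mult[OF dvd_mult])
  also have "phi * (phi ^ p + phi - 1) = phi ^ (p + 1) + 1"
    using phi_mult_phi_minus_1 by (simp add: algebra_simps)
  also have "(phi ^ (p + 1) - 1) * (phi ^ (p + 1) + 1) = (phi ^ (p + 1)) ^ 2 - 1"
    by (simp add: power2_eq_square algebra_simps)
  also have "\<dots> = phi ^ (2 * (p + 1)) - 1"
    by (simp only: power_mult mult.commute)
  finally show ?thesis .
qed

text \<open>By reciprocity \<open>(5/p) = (p/5)\<close>, and \<open>p \<equiv> 4 = 2\<^sup>2\<close> mod 5 would make it \<open>1\<close>.\<close>

lemma Legendre_5_eq_neg1_imp_not_dvd:
  assumes p: "prime p" "p > 2" and L: "Legendre 5 (int p) = -1"
  shows "\<not> 5 dvd p + 1"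
proof
  assume "5 dvd p + 1"
  then have "p mod 5 = 4"
    by presburger
  then have "int p mod 5 = 4"
    using zmod_int[of p 5] by simp
  then have "[2 ^ 2 = int p] (mod 5)" "\<not> [int p = 0] (mod 5)"
    by (simp_all add: cong_def)
  then have "QuadRes 5 (int p)" "\<not> [int p = 0] (mod 5)"
    unfolding QuadRes_def by blast+
  then have "Legendre (int p) 5 = 1"
    by (simp add: Legendre_def)
  moreover have "p \<noteq> 5"
    using L by (auto simp: Legendre_def cong_def)
  then have "Legendre (int p) (int 5) * Legendre (int 5) (int p) = 1"
    using p Quadratic_Reciprocity[of p 5] by simp
  ultimately show False
    using L by simp
qed

lemma complete_mod_prime_phi_period:
  assumes p: "prime p" "p \<noteq> 5" and complete: "complete_mod (gib a b) (int p)"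
  shows "of_nat p dvd phi ^ (2 * (p + 1)) - 1 \<and> \<not> 5 dvd p + 1"
proof (cases "p = 2")
  case True
  have "phi ^ (2 * (p + 1)) - 1 = ZPhi 4 8"
    using True by (simp add: eval_nat_numeral zphi_eq_iff)
  then show ?thesis
    unfolding of_nat_dvd_zphi_iff using True by simp
next
  case False
  with p have p2: "p > 2"
    using prime_ge_2_nat[OF p(1)] by linarith
  have "\<not> [5 = 0] (mod int p)"
  proof
    assume "[5 = 0] (mod int p)"
    then have "int p dvd int 5"
      by (simp only: cong_0_iff of_nat_numeral)
    then have "p dvd 5"
      by (simp only: int_dvd_int_iff)
    then show False
      using p primes_dvd_imp_eq[of p 5] by simp
  qed
  then consider "Legendre 5 (int p) = 1" | "Legendre 5 (int p) = -1"
    unfolding Legendre_def by (metis (full_types))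
  then show ?thesis
  proof cases
    case 1
    have "int p \<le> int (p - 1)"
      using phi_power_pred_prime_cong[OF p(1) p2 1] p2
      by (intro complete_mod_le_period[OF complete]) simp_all
    then show ?thesis
      using p2 by simp
  next
    case 2
    then show ?thesis
      using phi_power_double_succ_prime_cong Legendre_5_eq_neg1_imp_not_dvd p(1) p2 by blast
  qed
qed

lemma phi_period_prime_mult:
  assumes p: "prime p" and S: "of_nat p dvd phi ^ S - 1" and T: "of_nat r dvd phi ^ T - 1"
  shows "of_nat (r * p) dvd phi ^ (T * p * S) - 1"
proof (cases "p dvd r")
  case True
  then have "of_nat (r * p) dvd (phi ^ T) ^ p - 1"
    using T by (rule dvd_power_prime_diff_one)
  also have "(phi ^ T) ^ p - 1 dvd phi ^ (T * p * S) - 1"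
    using power_diff_one_dvd_power_mult_diff_one[of phi "T * p" S] by (simp add: power_mult)
  finally show ?thesis .
next
  case False
  then have "coprime (int r) (int p)"
    using p by (simp add: prime_imp_coprime coprime_commute)
  moreover have "of_int (int r) dvd phi ^ (T * p * S) - 1"
    using T power_diff_one_dvd_power_mult_diff_one[of phi T "p * S"]
    by (simp add: mult.assoc dvd_trans)
  moreover have "of_int (int p) dvd phi ^ (T * p * S) - 1"
    using S power_diff_one_dvd_power_mult_diff_one[of phi S "T * p"]
    by (simp add: mult.commute dvd_trans)
  ultimately show ?thesis
    using of_int_mult_dvd_zphi[of "int r" "int p"] by simp
qed

lemma complete_mod_phi_period:
  assumes "n > 0" "\<not> 5 dvd n" "complete_mod (gib a b) (int n)"
  shows "\<exists>T > 0. \<not> 5 dvd T \<and> of_nat n dvd phi ^ T - 1"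
  using assms
proof (induction n rule: less_induct)
  case (less n)
  show ?case
  proof (cases "n = 1")
    case True
    then show ?thesis by (intro exI[of _ 1]) simp
  next
    case False
    then obtain p r where p: "prime p" and n: "n = r * p"
      using prime_factor_nat by (metis dvd_def mult.commute)
    have "r > 0" "r < n"
      using less.prems(1) prime_gt_1_nat[OF p] n by auto
    moreover have "\<not> 5 dvd r" "p \<noteq> 5"
      using less.prems(2) n by auto
    moreover have "complete_mod (gib a b) (int r)" "complete_mod (gib a b) (int p)"
      using less.prems(3) n by (auto intro: complete_mod_dvd)
    ultimately obtain T where T: "T > 0" "\<not> 5 dvd T" "of_nat r dvd phi ^ T - 1"
      and P: "of_nat p dvd phi ^ (2 * (p + 1)) - 1" "\<not> 5 dvd p + 1"
      using less.IH complete_mod_prime_phi_period p by blast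
    have five: "prime (5 :: nat)"
      by simp
    have "\<not> 5 dvd p"
      using primes_dvd_imp_eq[OF five p] \<open>p \<noteq> 5\<close> by auto
    then have "\<not> 5 dvd T * p * (2 * (p + 1))"
      unfolding prime_dvd_mult_iff[OF five] using T(2) P(2) by simp
    moreover have "of_nat n dvd phi ^ (T * p * (2 * (p + 1))) - 1"
      unfolding n using p P(1) T(3) by (rule phi_period_prime_mult)
    ultimately show ?thesis
      using T(1) prime_gt_0_nat[OF p] by (intro exI[of _ "T * p * (2 * (p + 1))"]) simp
  qed
qed

section \<open>Residues modulo 5\<close>

text \<open>Modulo 5, \<open>\<phi>\<^sup>4 = 1 + \<epsilon>\<close> with \<open>\<epsilon> = 1 + 3\<phi>\<close> and \<open>\<epsilon>\<^sup>2 = 10 + 15\<phi>\<close>, so \<open>\<phi>\<^sup>4\<^sup>j \<equiv> 1 + j\<epsilon>\<close>.\<close>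

lemma gib_add_4_mult_cong:
  "[gib a b (n + 4 * j) = gib a b n + int j * (gib a b n + 3 * gib a b (n + 1))] (mod 5)"
proof -
  define e where "e = ZPhi 1 3"
  have "phi ^ 4 = 1 + e" "e ^ 2 = 5 * ZPhi 2 3"
    by (simp_all add: e_def eval_nat_numeral zphi_eq_iff)
  then have "of_int 5 dvd phi ^ (4 * j) - (1 + of_nat j * e)"
    using one_add_power_cong_linear[of "of_int 5" e j] by (simp add: power_mult)
  then have "[re (phi ^ (4 * j)) = 1 + int j] (mod 5)" "[im (phi ^ (4 * j)) = 3 * int j] (mod 5)"
    unfolding of_int_dvd_zphi_iff by (simp_all add: e_def cong_iff_dvd_diff mult.commute)
  then have "[re (phi ^ (4 * j)) * gib a b n + im (phi ^ (4 * j)) * gib a b (n + 1)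
      = (1 + int j) * gib a b n + 3 * int j * gib a b (n + 1)] (mod 5)"
    by (intro cong_add cong_mult cong_refl)
  then show ?thesis
    by (simp add: gib_add_phi_power algebra_simps)
qed

definition gib_norm :: "int \<Rightarrow> int \<Rightarrow> nat \<Rightarrow> int" where
  "gib_norm a b n = gib a b n ^ 2 + gib a b n * gib a b (n + 1) - gib a b (n + 1) ^ 2"

lemma gib_norm_eq: "gib_norm a b n = (-1) ^ Suc n * (a ^ 2 + a * b - b ^ 2)"
proof (induction n)
  case 0
  then show ?case
    by (simp add: gib_norm_def power2_eq_square algebra_simps)
next
  case (Suc n)
  have "gib_norm a b (Suc n) = - gib_norm a b n"
    using gib_add_2[of a b n] by (simp add: gib_norm_def power2_eq_square algebra_simps)
  then show ?case
    using Suc by simp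
qed

lemma gib_increment_not_dvd_5:
  assumes "\<not> [a ^ 2 + a * b - b ^ 2 = 0] (mod 5)"
  shows "\<not> 5 dvd gib a b n + 3 * gib a b (n + 1)"
proof
  assume "5 dvd gib a b n + 3 * gib a b (n + 1)"
  then obtain k where k: "gib a b n = 5 * k - 3 * gib a b (n + 1)"
    by (metis dvd_def add_diff_cancel_right')
  have "gib_norm a b n = 5 * (5 * k ^ 2 - 5 * k * gib a b (n + 1) + gib a b (n + 1) ^ 2)"
    unfolding gib_norm_def k by (simp add: power2_eq_square algebra_simps)
  moreover have "a ^ 2 + a * b - b ^ 2 = (-1) ^ Suc n * gib_norm a b n"
    by (simp add: gib_norm_eq flip: mult.assoc power_mult_distrib)
  ultimately have "5 dvd a ^ 2 + a * b - b ^ 2"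
    by simp
  then show False
    using assms by (simp add: cong_0_iff)
qed

lemma gib_progression_complete_mod_5:
  assumes "\<not> [a ^ 2 + a * b - b ^ 2 = 0] (mod 5)" "\<not> 5 dvd T"
  shows "\<exists>k. [gib a b (n + k * T) = r] (mod 5)"
proof -
  define c where "c = gib a b n + 3 * gib a b (n + 1)"
  have "\<not> 5 dvd int T"
    using assms(2) by presburger
  then have "\<not> 5 dvd int T * c"
    using gib_increment_not_dvd_5[OF assms(1), of n]
    unfolding c_def by (simp add: prime_dvd_mult_iff)
  then have "coprime (int T * c) 5"
    using prime_imp_coprime[of 5 "int T * c"] coprime_commute by auto
  then obtain x where x: "[int T * c * x = 1] (mod 5)"
    using cong_solve_coprime_int by blast
  define j where "j = nat ((r - gib a b n) * x mod 5)"
  have "[int j = (r - gib a b n) * x] (mod 5)"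
    unfolding j_def by (simp add: cong_def)
  then have "[int j * (int T * c) = (r - gib a b n) * x * (int T * c)] (mod 5)"
    by (rule cong_mult[OF _ cong_refl])
  also have "(r - gib a b n) * x * (int T * c) = (r - gib a b n) * (int T * c * x)"
    by (simp add: ac_simps)
  also have "[\<dots> = (r - gib a b n) * 1] (mod 5)"
    using x by (rule cong_mult[OF cong_refl])
  finally have "[gib a b n + int (j * T) * c = gib a b n + (r - gib a b n)] (mod 5)"
    by (intro cong_add cong_refl) (simp add: ac_simps)
  then have "[gib a b (n + 4 * (j * T)) = r] (mod 5)"
    using gib_add_4_mult_cong[of a b n "j * T"] unfolding c_def
    by (metis cong_trans diff_add_cancel add.commute)
  then show ?thesis
    by (intro exI[of _ "4 * j"]) (simp add: mult.assoc)
qed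

theorem mainTheorem17:
  fixes a b m :: int
  assumes "gcd a b = 1"
    and "\<not> [a^2 + a*b - b^2 = 0] (mod 5)"
    and "m \<ge> 1"
    and "\<not> (5 dvd m)"
    and "complete_mod (gib a b) m"
  shows "complete_mod (gib a b) (5 * m)"
proof -
  have "\<not> 5 dvd nat m"
    using assms(3,4) dvd_nat_abs_iff[of 5 m] by simp
  then obtain T where T: "T > 0" "\<not> 5 dvd T" "of_nat (nat m) dvd phi ^ T - 1"
    using complete_mod_phi_period[of "nat m" a b] assms(3,5) by auto
  then have period: "of_int m dvd phi ^ T - 1"
    using assms(3) by simp
  have "coprime 5 m"
    using assms(4) by (simp add: prime_imp_coprime)
  show ?thesis
    unfolding complete_mod_def
  proof
    fix r
    obtain n where n: "n \<ge> 1" "[gib a b n = r] (mod m)"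
      using assms(5) unfolding complete_mod_def by blast
    obtain k where "[gib a b (n + k * T) = r] (mod 5)"
      using gib_progression_complete_mod_5 assms(2) T(2) by blast
    moreover have "[gib a b (n + k * T) = r] (mod m)"
      using gib_add_mult_period_cong[OF period] n(2) by (metis cong_trans)
    ultimately have "[gib a b (n + k * T) = r] (mod 5 * m)"
      using \<open>coprime 5 m\<close> by (simp add: coprime_cong_mult)
    then show "\<exists>n'\<ge>1. [gib a b n' = r] (mod 5 * m)"
      using n(1) by (intro exI[of _ "n + k * T"]) simp
  qed
qed

end
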